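(* Let $\mathbb{F}$ be an algebraically closed field (of any characteristic) and let $(\mathcal{O},*,n)$ be the Okubo algebra over $\mathbb{F}$. Let $f\in\mathcal{O}$ be an idempotent, $f*f=f\neq 0$, and define the product $x\cdot y=(f*x)*(y*f)$ on $\mathcal{O}$. Then the linear map \[ \tau:\mathcal{O}\to\mathcal{O},\qquad \tau(x)=f*(f*x), \] is an automorphism of order $3$ of both algebras $(\mathcal{O},* )$ and $(\mathcal{O},\cdot)$ (and it preserves $n$). Moreover, the subalgebra of elements fixed by $\tau$ coincides with the centralizer $\{x\in\mathcal{O}: x*f=f*x\}$ of $f$ in $(\mathcal{O},* )$.
   Context: The Okubo algebra over a field $\mathbb{F}$ is the $8$-dimensional vector space $\mathcal{O}$ with basis $\{x_a: a\in\mathbb{Z}_3^2,\ a\neq(0,0)\}$ and multiplication defined on basis elements as follows: for $a=(i,j)$, $b=(k,l)$, let $\Delta=il-jk\in\mathbb{Z}_3$; if $a+b=(0,0)$ then $x_a*x_b=0$; otherwise $x_a*x_b=x_{a+b}$ if $\Delta=0$, $x_a*x_b=0$ if $\Delta=1$, and $x_a*x_b=-x_{a+b}$ if $\Delta=2$. It carries the quadratic form $n$ with $n(x_a)=0$ for all $a$ and polar form $n(x,y)=n(x+y)-n(x)-n(y)$ given by $n(x_a,x_b)=1$ if $a+b=0$ and $0$ otherwise. (In characteristic $\neq3$ this algebra is isomorphic to $\mathfrak{sl}_3(\mathbb{F})$ with $x*y=\omega xy-\omega^2yx-\frac{\omega-\omega^2}{3}\mathrm{tr}(xy)1$, $\omega$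 a primitive cube root of $1$.) The algebra satisfies $n(x*y)=n(x)n(y)$, $n(x*y,z)=n(x,y*z)$ and $(x*y)*x=x*(y*x)=n(x)y$ for all $x,y,z$. *)

theory Defs
  imports "HOL-Library.Numeral_Type" "HOL-Computational_Algebra.Polynomial"
begin

definition alg_closed :: "'a::field itself \<Rightarrow> bool" where
  "alg_closed _ \<longleftrightarrow> (\<forall>p :: 'a poly. degree p \<ge> 1 \<longrightarrow> (\<exists>x. poly p x = 0))"

text \<open>Elements of the Okubo algebra are coordinate functions on Z_3^2 vanishing at (0,0);
  the coordinate at a is the coefficient of the basis vector x_a.\<close>
type_synonym idx = "3 \<times> 3"

definition iadd :: "idx \<Rightarrow> idx \<Rightarrow> idx" where
  "iadd a b = (fst a + fst b, snd a + snd b)"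

definition ineg :: "idx \<Rightarrow> idx" where
  "ineg a = (- fst a, - snd a)"

definition okubo :: "(idx \<Rightarrow> 'a::field) set" where
  "okubo = {x. x (0, 0) = 0}"

text \<open>Structure constant: x_a * x_b = okubo_coef a b * x_{a+b}.\<close>
definition okubo_coef :: "idx \<Rightarrow> idx \<Rightarrow> 'a::field" where
  "okubo_coef a b =
     (let \<Delta> = fst a * snd b - snd a * fst b in
      if a = (0, 0) \<or> b = (0, 0) \<or> iadd a b = (0, 0) then 0
      else if \<Delta> = 0 then 1 else if \<Delta> = 1 then 0 else -1)"

definition okubo_mult :: "(idx \<Rightarrow> 'a::field) \<Rightarrow> (idx \<Rightarrow> 'a) \<Rightarrow> (idx \<Rightarrow> 'a)" (infixl "\<star>" 70) where
  "x \<star> y = (\<lambda>c. \<Sum>a\<in>UNIV. \<Sum>b\<in>UNIV. if iadd a b = c then okubo_coef a b * x a * y b else 0)"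

text \<open>Quadratic norm: n(x_a)=0, polar form n(x_a,x_b)=1 iff a+b=0. One representative
  of each pair {a,-a}, a \<noteq> 0.\<close>
definition okubo_norm :: "(idx \<Rightarrow> 'a::field) \<Rightarrow> 'a" where
  "okubo_norm x = (\<Sum>a\<in>{(1,0),(0,1),(1,1),(1,2)}. x a * x (ineg a))"

definition vadd :: "(idx \<Rightarrow> 'a::field) \<Rightarrow> (idx \<Rightarrow> 'a) \<Rightarrow> (idx \<Rightarrow> 'a)" where
  "vadd x y = (\<lambda>i. x i + y i)"

definition vscale :: "'a::field \<Rightarrow> (idx \<Rightarrow> 'a) \<Rightarrow> (idx \<Rightarrow> 'a)" where
  "vscale c x = (\<lambda>i. c * x i)"

end

theory Submission
  imports Defs
begin

text \<open>
  The Okubo algebra satisfies \<open>(x \<star> y) \<star> x = x \<star> (y \<star> x) = n(x) y\<close>; linearizing in \<open>x\<close> and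
  specializing to the idempotent \<open>f\<close> (which has \<open>n(f) = 1\<close>) gives
  \<open>\<tau> z = n(f,z) f - z \<star> f\<close>, \<open>(z \<star> f) \<star> f = n(f,z) f - f \<star> z\<close> and \<open>f \<star> \<tau> z = n(f,z) f - z\<close>.
  Applying the last formula twice yields \<open>\<tau>\<^sup>3 = id\<close>, and expanding \<open>\<tau> x \<star> \<tau> y\<close> with the
  first two and the linearized identity yields \<open>\<tau> (x \<star> y) = \<tau> x \<star> \<tau> y\<close>. Since
  \<open>f \<star> (y \<star> f) = (f \<star> y) \<star> f = y\<close>, the fixed points \<open>f \<star> (f \<star> x) = x\<close> of \<open>\<tau>\<close> are exactly the
  elements commuting with \<open>f\<close>.
\<close>

lemma UNIV_3: "(UNIV :: 3 set) = {0, 1, 2}"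
proof -
  have "x = 0 \<or> x = 1 \<or> x = 2" for x :: 3
  proof (cases x)
    case (of_int z)
    then have "z = 0 \<or> z = 1 \<or> z = 2" by auto
    then show ?thesis using of_int by auto
  qed
  then show ?thesis by auto
qed

lemma UNIV_idx: "(UNIV :: idx set) = {0, 1, 2} \<times> {0, 1, 2}"
  by (metis UNIV_3 UNIV_Times_UNIV)

lemma idx_fun_eq_iff:
  "(x :: idx \<Rightarrow> 'b) = y \<longleftrightarrow>
     x (0,0) = y (0,0) \<and> x (0,1) = y (0,1) \<and> x (0,2) = y (0,2) \<and>
     x (1,0) = y (1,0) \<and> x (1,1) = y (1,1) \<and> x (1,2) = y (1,2) \<and>
     x (2,0) = y (2,0) \<and> x (2,1) = y (2,1) \<and> x (2,2) = y (2,2)"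
  (is "_ \<longleftrightarrow> ?coords")
proof
  assume ?coords
  show "x = y"
  proof
    fix c :: idx
    have "c \<in> {0, 1, 2} \<times> {0, 1, 2}" using UNIV_idx by blast
    then show "x c = y c" using \<open>?coords\<close> by auto
  qed
qed simp

lemma uminus_3_simps [simp]: "- (1 :: 3) = 2" "- (2 :: 3) = 1"
  by simp_all

lemma okubo_mult_apply:
  "(x \<star> y) c = (\<Sum>a\<in>UNIV. okubo_coef a (fst c - fst a, snd c - snd a) * x a * y (fst c - fst a, snd c - snd a))"
proof -
  have "(iadd a b = c) = (b = (fst c - fst a, snd c - snd a))" for a b
    by (auto simp: iadd_def prod_eq_iff algebra_simps)
  then show ?thesis
    unfolding okubo_mult_def by (simp add: if_distrib cong: if_cong)
qed

lemma okubo_mult_coords: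
  shows "(x \<star> y) (0,0) = 0"
  and "(x \<star> y) (0,1) = x (0,2) * y (0,2) - x (2,0) * y (1,1) - x (2,1) * y (1,0) - x (2,2) * y (1,2)"
  and "(x \<star> y) (0,2) = x (0,1) * y (0,1) - x (1,0) * y (2,2) - x (1,1) * y (2,1) - x (1,2) * y (2,0)"
  and "(x \<star> y) (1,0) = - x (0,1) * y (1,2) - x (1,1) * y (0,2) + x (2,0) * y (2,0) - x (2,1) * y (2,2)"
  and "(x \<star> y) (1,1) = - x (0,1) * y (1,0) - x (1,2) * y (0,2) - x (2,0) * y (2,1) + x (2,2) * y (2,2)"
  and "(x \<star> y) (1,2) = - x (0,1) * y (1,1) - x (1,0) * y (0,2) + x (2,1) * y (2,1) - x (2,2) * y (2,0)"
  and "(x \<star> y) (2,0) = - x (0,2) * y (2,1) + x (1,0) * y (1,0) - x (1,2) * y (1,1) - x (2,2) * y (0,1)"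
  and "(x \<star> y) (2,1) = - x (0,2) * y (2,2) - x (1,1) * y (1,0) + x (1,2) * y (1,2) - x (2,0) * y (0,1)"
  and "(x \<star> y) (2,2) = - x (0,2) * y (2,0) - x (1,0) * y (1,2) + x (1,1) * y (1,1) - x (2,1) * y (0,1)"
  by (simp_all add: okubo_mult_apply UNIV_idx okubo_coef_def iadd_def Let_def)

lemma okubo_norm_coords:
  "okubo_norm x = x (1,0) * x (2,0) + x (0,1) * x (0,2) + x (1,1) * x (2,2) + x (1,2) * x (2,1)"
  by (simp add: okubo_norm_def ineg_def)

definition okubo_polar :: "(idx \<Rightarrow> 'a::field) \<Rightarrow> (idx \<Rightarrow> 'a) \<Rightarrow> 'a" where
  "okubo_polar x y = okubo_norm (vadd x y) - okubo_norm x - okubo_norm y"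

lemma okubo_polar_coords:
  "okubo_polar x y = x (1,0) * y (2,0) + x (2,0) * y (1,0) + x (0,1) * y (0,2) + x (0,2) * y (0,1)
     + x (1,1) * y (2,2) + x (2,2) * y (1,1) + x (1,2) * y (2,1) + x (2,1) * y (1,2)"
  by (simp add: okubo_polar_def okubo_norm_coords vadd_def algebra_simps)

lemma okubo_polar_self: "okubo_polar x x = 2 * okubo_norm x"
  by (simp add: okubo_polar_coords okubo_norm_coords algebra_simps)

lemma okubo_polar_scale_diff_right:
  "okubo_polar x (\<lambda>c. a * u c - v c) = a * okubo_polar x u - okubo_polar x v"
  by (simp add: okubo_polar_coords algebra_simps)

lemma okubo_polar_mult_assoc: "okubo_polar (x \<star> y) z = okubo_polar x (y \<star> z)"
  by (simp add: okubo_mult_coords okubo_polar_coords algebra_simps)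

lemma okubo_polar_commute: "okubo_polar x y = okubo_polar y x"
  by (simp add: okubo_polar_coords algebra_simps)

lemma okubo_norm_mult: "okubo_norm (x \<star> y) = okubo_norm x * okubo_norm y"
  by (simp add: okubo_mult_coords okubo_norm_coords algebra_simps)

lemma okubo_mult_in_okubo: "x \<star> y \<in> okubo"
  by (simp add: okubo_def okubo_mult_coords)

lemma okubo_mult_vadd_right: "w \<star> vadd u v = vadd (w \<star> u) (w \<star> v)"
  unfolding idx_fun_eq_iff by (simp add: okubo_mult_coords vadd_def algebra_simps)

lemma okubo_mult_vscale_right: "w \<star> vscale a u = vscale a (w \<star> u)"
  unfolding idx_fun_eq_iff by (simp add: okubo_mult_coords vscale_def algebra_simps)

lemma okubo_mult_scale_diff_left:
  "(\<lambda>c. a * u c - v c) \<star> w = (\<lambda>c. a * (u \<star> w) c - (v \<star> w) c)"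
  unfolding idx_fun_eq_iff by (simp add: okubo_mult_coords algebra_simps)

lemma okubo_mult_scale_diff_right:
  "w \<star> (\<lambda>c. a * u c - v c) = (\<lambda>c. a * (w \<star> u) c - (w \<star> v) c)"
  unfolding idx_fun_eq_iff by (simp add: okubo_mult_coords algebra_simps)

lemma okubo_mult_mult_left_self:
  "y \<in> okubo \<Longrightarrow> (x \<star> y) \<star> x = vscale (okubo_norm x) y"
  unfolding idx_fun_eq_iff
  by (simp add: okubo_def vscale_def okubo_mult_coords okubo_norm_coords algebra_simps)

lemma okubo_mult_mult_right_self:
  "y \<in> okubo \<Longrightarrow> x \<star> (y \<star> x) = vscale (okubo_norm x) y"
  unfolding idx_fun_eq_iff
  by (simp add: okubo_def vscale_def okubo_mult_coords okubo_norm_coords algebra_simps)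

lemma okubo_mult_mult_left_linear:
  "y \<in> okubo \<Longrightarrow> vadd ((x \<star> y) \<star> z) ((z \<star> y) \<star> x) = vscale (okubo_polar x z) y"
  unfolding idx_fun_eq_iff
  by (simp add: okubo_def vadd_def vscale_def okubo_mult_coords okubo_polar_coords algebra_simps)

lemma okubo_mult_mult_right_linear:
  "y \<in> okubo \<Longrightarrow> vadd (x \<star> (y \<star> z)) (z \<star> (y \<star> x)) = vscale (okubo_polar x z) y"
  unfolding idx_fun_eq_iff
  by (simp add: okubo_def vadd_def vscale_def okubo_mult_coords okubo_polar_coords algebra_simps)

locale okubo_idempotent =
  fixes f :: "idx \<Rightarrow> 'a::field"
  assumes f_okubo: "f \<in> okubo"
    and idempotent: "f \<star> f = f"
    and nonzero: "f \<noteq> (\<lambda>_. 0)"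
begin

definition tau :: "(idx \<Rightarrow> 'a) \<Rightarrow> (idx \<Rightarrow> 'a)" where
  "tau x = f \<star> (f \<star> x)"

lemma norm_f: "okubo_norm f = 1"
proof -
  have "f = vscale (okubo_norm f) f"
    using okubo_mult_mult_left_self[OF f_okubo, of f] idempotent by simp
  moreover obtain c where "f c \<noteq> 0" using nonzero by (auto simp: fun_eq_iff)
  ultimately show ?thesis by (metis vscale_def mult_cancel_right1)
qed

lemma f_mult_mult_f: "y \<in> okubo \<Longrightarrow> f \<star> (y \<star> f) = y"
  by (simp add: okubo_mult_mult_right_self norm_f vscale_def)

lemma mult_f_mult_f: "y \<in> okubo \<Longrightarrow> (f \<star> y) \<star> f = y"
  by (simp add: okubo_mult_mult_left_self norm_f vscale_def)

lemma tau_eq_polar: "tau z = (\<lambda>c. okubo_polar f z * f c - (z \<star> f) c)"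
  using okubo_mult_mult_right_linear[OF f_okubo, of f z]
  by (simp add: tau_def idempotent vadd_def vscale_def fun_eq_iff eq_diff_eq)

lemma mult_f_mult_f_eq_polar: "(z \<star> f) \<star> f = (\<lambda>c. okubo_polar f z * f c - (f \<star> z) c)"
  using okubo_mult_mult_left_linear[OF f_okubo, of f z]
  by (simp add: idempotent vadd_def vscale_def fun_eq_iff eq_diff_eq add.commute)

lemma f_mult_tau: "z \<in> okubo \<Longrightarrow> f \<star> tau z = (\<lambda>c. okubo_polar f z * f c - z c)"
  by (simp add: tau_eq_polar okubo_mult_scale_diff_right idempotent f_mult_mult_f)

lemma tau_okubo: "tau x \<in> okubo"
  by (simp add: tau_def okubo_mult_in_okubo)

lemma tau_f: "tau f = f"
  by (simp add: tau_def idempotent)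

lemma tau_mult:
  assumes x: "x \<in> okubo" and y: "y \<in> okubo"
  shows "tau (x \<star> y) = tau x \<star> tau y"
proof -
  let ?px = "okubo_polar f x" and ?py = "okubo_polar f y"
  have expand: "tau x \<star> tau y = (\<lambda>c. ?py * (f \<star> x) c - ?px * y c + ((x \<star> f) \<star> (y \<star> f)) c)"
    unfolding tau_eq_polar okubo_mult_scale_diff_left okubo_mult_scale_diff_right idempotent
      f_mult_mult_f[OF y] mult_f_mult_f_eq_polar
    by (simp add: fun_eq_iff algebra_simps)
  have "tau (x \<star> y) c = (tau x \<star> tau y) c" for c
  proof -
    have cross: "((x \<star> f) \<star> (y \<star> f)) c + (((y \<star> f) \<star> f) \<star> x) c = okubo_polar x (y \<star> f) * f c"
      using fun_cong[OF okubo_mult_mult_left_linear[OF f_okubo, of x "y \<star> f"], of c]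
      by (simp add: vadd_def vscale_def)
    have "(((y \<star> f) \<star> f) \<star> x) c = ?py * (f \<star> x) c - ((f \<star> y) \<star> x) c"
      by (simp add: mult_f_mult_f_eq_polar okubo_mult_scale_diff_left)
    moreover have "((f \<star> y) \<star> x) c = ?px * y c - ((x \<star> y) \<star> f) c"
      using fun_cong[OF okubo_mult_mult_left_linear[OF y, of f x], of c]
      by (simp add: vadd_def vscale_def eq_diff_eq)
    moreover have "okubo_polar x (y \<star> f) = okubo_polar f (x \<star> y)"
      by (metis okubo_polar_mult_assoc okubo_polar_commute)
    ultimately have "((x \<star> f) \<star> (y \<star> f)) c
        = okubo_polar f (x \<star> y) * f c - ?py * (f \<star> x) c + ?px * y c - ((x \<star> y) \<star> f) c"
      using cross by algebra
    then show ?thesis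
      unfolding expand by (simp add: tau_eq_polar)
  qed
  then show ?thesis ..
qed

lemma tau_tau_tau:
  assumes x: "x \<in> okubo"
  shows "tau (tau (tau x)) = x"
proof -
  define w where "w = f \<star> tau x"
  have w: "w = (\<lambda>c. okubo_polar f x * f c - x c)"
    unfolding w_def by (rule f_mult_tau[OF x])
  have "okubo_polar f w = okubo_polar f x"
    by (simp add: w okubo_polar_scale_diff_right okubo_polar_self norm_f)
  moreover have "w \<in> okubo"
    using x f_okubo by (simp add: w okubo_def)
  moreover have "tau (tau (tau x)) = f \<star> tau w"
    by (simp add: tau_def w_def)
  ultimately show ?thesis
    by (simp add: f_mult_tau w)
qed

lemma bij_betw_tau: "bij_betw tau okubo okubo"
  by (rule bij_betw_byWitness[where f' = "\<lambda>x. tau (tau x)"])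
    (auto simp: tau_tau_tau tau_okubo)

lemma okubo_norm_tau: "okubo_norm (tau x) = okubo_norm x"
  by (simp add: tau_def okubo_norm_mult norm_f)

lemma tau_fixed_iff_commute:
  assumes x: "x \<in> okubo"
  shows "tau x = x \<longleftrightarrow> x \<star> f = f \<star> x"
proof
  assume "tau x = x"
  then have "x \<star> f = (f \<star> (f \<star> x)) \<star> f"
    by (simp add: tau_def)
  also have "\<dots> = f \<star> x"
    by (rule mult_f_mult_f[OF okubo_mult_in_okubo])
  finally show "x \<star> f = f \<star> x" .
next
  assume "x \<star> f = f \<star> x"
  then show "tau x = x"
    using f_mult_mult_f[OF x] by (simp add: tau_def)
qed

text \<open>
  If \<open>\<tau>\<close> fixed every element, then \<open>f \<star> z = n(f,z) f - z\<close> for all \<open>z\<close>; on the basis vectors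
  of index \<open>(1,0)\<close> and \<open>(0,1)\<close> this forces \<open>f(2,0) f(1,0) = 1\<close>, \<open>f(2,0) f(0,2) = 0\<close> and
  \<open>f(0,2) f(0,1) = 1\<close>, which is impossible.
\<close>
lemma tau_not_identity: "\<exists>x\<in>okubo. tau x \<noteq> x"
proof (rule ccontr)
  assume "\<not> ?thesis"
  then have left_mult_f: "f \<star> z = (\<lambda>c. okubo_polar f z * f c - z c)" if "z \<in> okubo" for z
    using f_mult_tau[OF that] that by auto
  define e :: "idx \<Rightarrow> idx \<Rightarrow> 'a" where "e a = (\<lambda>c. if c = a then 1 else 0)" for a
  have "e (1,0) \<in> okubo" "e (0,1) \<in> okubo"
    by (simp_all add: e_def okubo_def)
  from this[THEN left_mult_f]
  have "(f \<star> e (1,0)) (1,0) = okubo_polar f (e (1,0)) * f (1,0) - 1"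
    and "(f \<star> e (1,0)) (0,2) = okubo_polar f (e (1,0)) * f (0,2)"
    and "(f \<star> e (0,1)) (0,1) = okubo_polar f (e (0,1)) * f (0,1) - 1"
    by (simp_all add: e_def)
  then have "f (2,0) * f (1,0) = 1" "f (2,0) * f (0,2) = 0" "f (0,2) * f (0,1) = 1"
    by (simp_all add: okubo_mult_coords okubo_polar_coords e_def)
  then show False
    by (metis mult_zero_left mult_zero_right no_zero_divisors zero_neq_one)
qed

lemma tau_unital_mult:
  assumes "x \<in> okubo" and "y \<in> okubo"
  shows "tau ((f \<star> x) \<star> (y \<star> f)) = (f \<star> tau x) \<star> (tau y \<star> f)"
  using assms by (simp add: tau_mult okubo_mult_in_okubo f_okubo tau_f)

end

theorem proposition5p2:
  fixes f :: "idx \<Rightarrow> 'a::field"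
    and dot :: "(idx \<Rightarrow> 'a) \<Rightarrow> (idx \<Rightarrow> 'a) \<Rightarrow> (idx \<Rightarrow> 'a)"
    and \<tau> :: "(idx \<Rightarrow> 'a) \<Rightarrow> (idx \<Rightarrow> 'a)"
  assumes "alg_closed TYPE('a)"
    and "f \<in> okubo" and "f \<star> f = f" and "f \<noteq> (\<lambda>_. 0)"
    and "\<And>x y. dot x y = (f \<star> x) \<star> (y \<star> f)"
    and "\<And>x. \<tau> x = f \<star> (f \<star> x)"
  shows "bij_betw \<tau> okubo okubo
    \<and> (\<forall>x\<in>okubo. \<forall>y\<in>okubo. \<tau> (vadd x y) = vadd (\<tau> x) (\<tau> y))
    \<and> (\<forall>c. \<forall>x\<in>okubo. \<tau> (vscale c x) = vscale c (\<tau> x))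
    \<and> (\<forall>x\<in>okubo. \<forall>y\<in>okubo. \<tau> (x \<star> y) = \<tau> x \<star> \<tau> y)
    \<and> (\<forall>x\<in>okubo. \<forall>y\<in>okubo. \<tau> (dot x y) = dot (\<tau> x) (\<tau> y))
    \<and> (\<forall>x\<in>okubo. \<tau> (\<tau> (\<tau> x)) = x)
    \<and> (\<exists>x\<in>okubo. \<tau> x \<noteq> x)
    \<and> (\<forall>x\<in>okubo. okubo_norm (\<tau> x) = okubo_norm x)
    \<and> {x\<in>okubo. \<tau> x = x} = {x\<in>okubo. x \<star> f = f \<star> x}"
proof -
  interpret okubo_idempotent f
    using assms(2-4) by unfold_locales
  have "\<tau> = tau"
    by (simp add: fun_eq_iff tau_def assms(6))
  moreover have "dot = (\<lambda>x y. (f \<star> x) \<star> (y \<star> f))"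
    by (simp add: fun_eq_iff assms(5))
  ultimately show ?thesis
    using bij_betw_tau tau_mult tau_unital_mult tau_tau_tau tau_not_identity okubo_norm_tau
      tau_fixed_iff_commute
    by (auto simp: tau_def okubo_mult_vadd_right okubo_mult_vscale_right)
qed

end
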